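(* Let $f\in\{0,1\}^n$ have a $2$-tilde-error overlap of shift $r$ with error positions $i<j$ and operations $O_i,O_j$. Let $\tilde\beta_r(f)=\mathrm{pre}_r(f)\,O_j(f)$. Then $\tilde\beta_r(f)$ is not $f$-free if and only if the $2$-tilde-error overlap satisfies Condition$^\sim$. Here Condition$^\sim$ means: the overlap is of type RR or SS, $r$ is even, $j-i=r/2$, and $f[i..(i+r/2-1)]=f[j..(j+r/2-1)]$.
   Context: Words are over $\{0,1\}$. For $w$ of length $n$: $w[k]$ is its $k$-th symbol, $w[a..b]$ is the factor from position $a$ to $b$, $\mathrm{pre}_l(w)=w[1..l]$ and $\mathrm{suf}_l(w)=w[n-l+1..n]$. A word is $f$-free if it does not contain $f$ as a factor. Operations: the replacement $R_i$ flips the symbol at position $i$. The swap $S_i$ is defined when $w[i]\ne w[i+1]$ and exchanges these two symbols. $\mathrm{dist}_\sim(u,v)$ is the minimum number of replacements and swaps transforming $u$ into the equal-length word $v$. A tilde-transformation is minimal if it uses exactly $\mathrm{dist}_\sim$ operations and modifies each position at most once. $f$ has a $2$-tilde-error overlap of length $l=n-r$ (with $1\le l\le n-1$; $r$ is the shift) if $\mathrm{dist}_\sim(\mathrm{pre}_l(f),\mathrm{suf}_l(f))=2$. In that case fix a minimal tilde-transformation from $\mathrm{pre}_l(f)$ to $\mathrm{suf}_l(f)$. It consists of two operations $O_i\in\{R_i,S_i\}$ and $O_j\in\{R_j,S_j\}$ at positions $i<j$ (the error positions). The words $O_i(f)$ and $O_j(f)$ are obtained by applying these operations to $f$ at the same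 positions. The type is RR, SR, RS or SS according to whether $(O_i,O_j)$ is (replacement, replacement), (swap, replacement), (replacement, swap) or (swap, swap). *)

theory Defs
  imports Main "HOL-Library.Sublist"
begin

text \<open>Binary words are bool lists; positions are 1-indexed as in the paper:
  w[k] = w ! (k - 1).\<close>

datatype tilde_op = Rep nat | Swp nat

fun op_pos :: "tilde_op \<Rightarrow> nat" where
  "op_pos (Rep i) = i"
| "op_pos (Swp i) = i"

fun is_rep :: "tilde_op \<Rightarrow> bool" where
  "is_rep (Rep _) = True"
| "is_rep (Swp _) = False"

fun is_swp :: "tilde_op \<Rightarrow> bool" where
  "is_swp (Rep _) = False"
| "is_swp (Swp _) = True"

fun touched :: "tilde_op \<Rightarrow> nat set" where
  "touched (Rep i) = {i}"
| "touched (Swp i) = {i, Suc i}"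

fun op_defined :: "bool list \<Rightarrow> tilde_op \<Rightarrow> bool" where
  "op_defined w (Rep i) = (1 \<le> i \<and> i \<le> length w)"
| "op_defined w (Swp i) = (1 \<le> i \<and> i + 1 \<le> length w \<and> w ! (i - 1) \<noteq> w ! i)"

fun apply_op :: "bool list \<Rightarrow> tilde_op \<Rightarrow> bool list" where
  "apply_op w (Rep i) = w[i - 1 := \<not> w ! (i - 1)]"
| "apply_op w (Swp i) = w[i - 1 := w ! i, i := w ! (i - 1)]"

definition tilde_step :: "bool list \<Rightarrow> bool list \<Rightarrow> bool" where
  "tilde_step u v \<longleftrightarrow> (\<exists>op. op_defined u op \<and> v = apply_op u op)"

definition dist_tilde :: "bool list \<Rightarrow> bool list \<Rightarrow> nat" where
  "dist_tilde u v = (LEAST k. (tilde_step ^^ k) u v)"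

fun apply_seq :: "bool list \<Rightarrow> tilde_op list \<Rightarrow> bool list \<Rightarrow> bool" where
  "apply_seq u [] v = (u = v)"
| "apply_seq u (op # os) v = (op_defined u op \<and> apply_seq (apply_op u op) os v)"

definition minimal_tilde_transf :: "bool list \<Rightarrow> bool list \<Rightarrow> tilde_op list \<Rightarrow> bool" where
  "minimal_tilde_transf u v ops \<longleftrightarrow>
     length ops = dist_tilde u v \<and> apply_seq u ops v \<and>
     (\<forall>a < length ops. \<forall>b < length ops. a \<noteq> b \<longrightarrow> touched (ops ! a) \<inter> touched (ops ! b) = {})"

definition pre :: "nat \<Rightarrow> bool list \<Rightarrow> bool list" where
  "pre l w = take l w"

definition suf :: "nat \<Rightarrow> bool list \<Rightarrow> bool list" where
  "suf l w = drop (length w - l) w"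

text \<open>Factor w[a..b] (1-indexed, inclusive).\<close>
definition factor :: "bool list \<Rightarrow> nat \<Rightarrow> nat \<Rightarrow> bool list" where
  "factor w a b = take (Suc b - a) (drop (a - 1) w)"

definition free :: "bool list \<Rightarrow> bool list \<Rightarrow> bool" where
  "free f w \<longleftrightarrow> \<not> sublist f w"

end

theory Submission
  imports Defs
begin

text \<open>If f occurs in pre_r(f) O_j(f) at offset s, then for t = r - s the word f has an
  overlap of shift t whose errors are those of O_j, and an overlap of shift s whose errors
  are those of O_i moved right by t. Composing the two describes the overlap of shift r a
  second time; comparing its error set with that of O_i O_j forces s = t = r/2,
  j = i + r/2 and operations of the same type, and the factor condition says the shift-r/2
  overlap has no error in f[i..j-1]. Conversely, under Condition, whether the shift-r/2
  overlap with the errors of O_j holds at a position is r/2-periodic and holds on the window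
  f[i..j-1], hence holds everywhere, which is an occurrence of f at offset r/2.\<close>

definition flip_at :: "nat set \<Rightarrow> bool list \<Rightarrow> bool list" where
  "flip_at E w = map (\<lambda>k. w ! k \<noteq> (Suc k \<in> E)) [0..<length w]"

lemma length_flip_at [simp]: "length (flip_at E w) = length w"
  by (simp add: flip_at_def)

lemma nth_flip_at [simp]: "k < length w \<Longrightarrow> flip_at E w ! k = (w ! k \<noteq> (Suc k \<in> E))"
  by (simp add: flip_at_def)

lemma flip_at_flip_at:
  "A \<inter> B = {} \<Longrightarrow> flip_at A (flip_at B w) = flip_at (A \<union> B) w"
  by (rule nth_equalityI) auto

lemma op_pos_in_touched: "op_pos op \<in> touched op"
  by (cases op) auto

lemma op_pos_le_touched: "p \<in> touched op \<Longrightarrow> op_pos op \<le> p"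
  by (cases op) auto

lemma touched_subset_if_op_defined: "op_defined w op \<Longrightarrow> touched op \<subseteq> {1..length w}"
  by (cases op) auto

lemma op_defined_take: "op_defined (take m w) op \<Longrightarrow> op_defined w op"
  by (cases op) auto

lemma apply_op_eq_flip_at: "op_defined w op \<Longrightarrow> apply_op w op = flip_at (touched op) w"
  by (cases op) (auto intro!: nth_equalityI simp: nth_list_update)

lemma op_defined_flip_at:
  assumes "op_defined (flip_at E w) op" and "touched op \<inter> E = {}"
  shows "op_defined w op"
  using assms by (cases op) auto

lemma apply_seq_disjoint_pair:
  assumes "apply_seq u [O1, O2] v" and "touched O1 \<inter> touched O2 = {}"
  shows "op_defined u O1 \<and> op_defined u O2 \<and> v = flip_at (touched O1 \<union> touched O2) u"
proof -
  have "op_defined u O1" and "op_defined (flip_at (touched O1) u) O2"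
    and "v = apply_op (flip_at (touched O1) u) O2"
    using assms(1) by (auto simp: apply_op_eq_flip_at)
  with assms(2) show ?thesis
    by (auto simp: apply_op_eq_flip_at flip_at_flip_at Un_commute Int_commute
        intro: op_defined_flip_at)
qed

definition shift_overlap :: "nat set \<Rightarrow> nat \<Rightarrow> bool list \<Rightarrow> bool" where
  "shift_overlap E p f \<longleftrightarrow> (\<forall>k. p + k < length f \<longrightarrow> f ! (p + k) = (f ! k \<noteq> (Suc k \<in> E)))"

lemma shift_overlap_iff_drop:
  "p \<le> length f \<Longrightarrow> shift_overlap E p f \<longleftrightarrow> drop p f = flip_at E (take (length f - p) f)"
  unfolding shift_overlap_def list_eq_iff_nth_eq by auto

lemma shift_overlap_empty_zero: "shift_overlap {} 0 f"
  by (simp add: shift_overlap_def)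

lemma shift_overlap_unique:
  assumes "shift_overlap A p f" "shift_overlap B p f" "0 < k" "p + k \<le> length f"
  shows "k \<in> A \<longleftrightarrow> k \<in> B"
  using assms unfolding shift_overlap_def
  by (metis Suc_diff_1 Suc_le_lessD add_Suc_right)

lemma shift_overlap_add:
  assumes "shift_overlap A s f" "shift_overlap B t f"
  shows "shift_overlap {p. (p \<in> A) \<noteq> (s + p \<in> B)} (s + t) f"
  unfolding shift_overlap_def
proof (intro allI impI)
  fix k assume k: "s + t + k < length f"
  have "f ! (s + t + k) = (f ! (s + k) \<noteq> (Suc (s + k) \<in> B))"
    using assms(2) k unfolding shift_overlap_def by (metis add.assoc add.commute)
  with assms(1) k show "f ! (s + t + k) = (f ! k \<noteq> (Suc k \<in> {p. (p \<in> A) \<noteq> (s + p \<in> B)}))"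
    unfolding shift_overlap_def by auto
qed

lemma shift_overlap_sub:
  assumes C: "shift_overlap C (t + s) f" and B: "shift_overlap B t f"
    and "B \<subseteq> C" "0 \<notin> C" and prefix: "\<And>q. q < t \<Longrightarrow> f ! (s + q) = f ! q"
  shows "shift_overlap ((+) t ` (C - B)) s f"
  unfolding shift_overlap_def
proof (intro allI impI)
  fix k assume k: "s + k < length f"
  show "f ! (s + k) = (f ! k \<noteq> (Suc k \<in> (+) t ` (C - B)))"
  proof (cases "k < t")
    case True
    have "Suc k \<notin> (+) t ` C"
    proof
      assume "Suc k \<in> (+) t ` C"
      then obtain x where "x \<in> C" "Suc k = t + x" by blast
      with True \<open>0 \<notin> C\<close> show False by (cases x) auto
    qed
    with prefix[OF True] show ?thesis by auto
  next
    case False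
    then obtain m where m: "k = t + m" using le_Suc_ex not_less by blast
    have "f ! (s + k) = (f ! m \<noteq> (Suc m \<in> C))"
      using C k m unfolding shift_overlap_def by (metis add.commute add.left_commute)
    moreover have "f ! k = (f ! m \<noteq> (Suc m \<in> B))"
      using B k m unfolding shift_overlap_def by simp
    ultimately show ?thesis using m \<open>B \<subseteq> C\<close> by auto
  qed
qed

lemma swap_pos_in_shift_overlap_one:
  assumes "shift_overlap E 1 f" and "op_defined f (Swp b)"
  shows "b \<in> E"
  using assms unfolding shift_overlap_def
  by (metis Suc_diff_1 Suc_eq_plus1 Suc_le_lessD add.commute le_add_diff_inverse2
      op_defined.simps(2))

lemma periodic_window_all:
  fixes P :: "nat \<Rightarrow> bool"
  assumes period: "\<And>k. k + p < m \<Longrightarrow> P (k + p) = P k"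
    and window: "\<And>k. a \<le> k \<Longrightarrow> k < a + p \<Longrightarrow> P k"
    and "0 < p" "a + p \<le> m" "k < m"
  shows "P k"
proof -
  have up: "P k" if "a \<le> k" "k < m" for k
    using that
  proof (induction k rule: less_induct)
    case (less k)
    show ?case
    proof (cases "k < a + p")
      case True
      with less.prems window show ?thesis by blast
    next
      case False
      then have "P (k - p)" using less \<open>0 < p\<close> by (intro less.IH) auto
      with period[of "k - p"] False less.prems show ?thesis by simp
    qed
  qed
  have down: "P k" if "k < a" for k
    using that
  proof (induction "a - k" arbitrary: k rule: less_induct)
    case less
    have "P (k + p)"
    proof (cases "a \<le> k + p")
      case True
      with up less.prems \<open>a + p \<le> m\<close> show ?thesis by simp
    next
      case False
      with less.hyps[of "k + p"] \<open>0 < p\<close> show ?thesis by simp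
    qed
    with period[of k] less.prems \<open>a + p \<le> m\<close> show ?case by simp
  qed
  from up down assms show ?thesis by (cases "a \<le> k") auto
qed

lemma sublist_iff_nth:
  "sublist xs ys \<longleftrightarrow>
    (\<exists>s. s + length xs \<le> length ys \<and> (\<forall>q < length xs. ys ! (s + q) = xs ! q))"
proof
  assume "sublist xs ys"
  then obtain ps ss where "ys = ps @ xs @ ss" by (auto simp: sublist_def)
  then show "\<exists>s. s + length xs \<le> length ys \<and> (\<forall>q < length xs. ys ! (s + q) = xs ! q)"
    by (intro exI[of _ "length ps"]) (auto simp: nth_append)
next
  assume "\<exists>s. s + length xs \<le> length ys \<and> (\<forall>q < length xs. ys ! (s + q) = xs ! q)"
  then obtain s where "s + length xs \<le> length ys" "\<forall>q < length xs. ys ! (s + q) = xs ! q"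
    by blast
  then have "take (length xs) (drop s ys) = xs"
    by (intro nth_equalityI) auto
  then have "ys = take s ys @ xs @ drop (length xs) (drop s ys)"
    by (metis append_take_drop_id)
  then show "sublist xs ys"
    by (metis sublist_appendI)
qed

lemma sublist_take_append_flip_at_iff:
  assumes "r \<le> length f"
  shows "sublist f (take r f @ flip_at T f) \<longleftrightarrow>
    (\<exists>s t. s + t = r \<and> shift_overlap T t f \<and> (\<forall>q < t. f ! (s + q) = f ! q))"
proof -
  have nth_occ: "(take r f @ flip_at T f) ! (s + q) =
      (if q < r - s then f ! (s + q) else flip_at T f ! (q - (r - s)))"
    if "s \<le> r" "q < length f" for s q
    using that assms by (auto simp: nth_append min_def add.commute)
  show ?thesis
    unfolding sublist_iff_nth
  proof
    assume "\<exists>s. s + length f \<le> length (take r f @ flip_at T f) \<and>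
      (\<forall>q < length f. (take r f @ flip_at T f) ! (s + q) = f ! q)"
    then obtain s where s: "s \<le> r"
      and occ: "\<And>q. q < length f \<Longrightarrow> (take r f @ flip_at T f) ! (s + q) = f ! q"
      using assms by auto
    have "shift_overlap T (r - s) f"
      unfolding shift_overlap_def
    proof (intro allI impI)
      fix k assume k: "r - s + k < length f"
      from occ[OF k] nth_occ[OF s k] k show "f ! (r - s + k) = (f ! k \<noteq> (Suc k \<in> T))"
        by simp
    qed
    moreover have "\<forall>q < r - s. f ! (s + q) = f ! q"
    proof (intro allI impI)
      fix q assume "q < r - s"
      with occ[of q] nth_occ[OF s, of q] assms show "f ! (s + q) = f ! q" by simp
    qed
    ultimately show "\<exists>s t. s + t = r \<and> shift_overlap T t f \<and> (\<forall>q < t. f ! (s + q) = f ! q)"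
      using s by (intro exI[of _ s] exI[of _ "r - s"]) auto
  next
    assume "\<exists>s t. s + t = r \<and> shift_overlap T t f \<and> (\<forall>q < t. f ! (s + q) = f ! q)"
    then obtain s t where st: "s + t = r" and overlap: "shift_overlap T t f"
      and prefix: "\<forall>q < t. f ! (s + q) = f ! q"
      by blast
    have "(take r f @ flip_at T f) ! (s + q) = f ! q" if q: "q < length f" for q
    proof (cases "q < t")
      case True
      then have "q < r - s" using st by simp
      with nth_occ[OF _ q] st prefix show ?thesis by simp
    next
      case False
      then obtain k where k: "q = t + k" using le_Suc_ex not_less by blast
      with nth_occ[OF _ q] st overlap q show ?thesis
        unfolding shift_overlap_def by auto
    qed
    with st assms show "\<exists>s. s + length f \<le> length (take r f @ flip_at T f) \<and>
      (\<forall>q < length f. (take r f @ flip_at T f) ! (s + q) = f ! q)"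
      by (intro exI[of _ s]) auto
  qed
qed

lemma factor_eq_take_drop: "1 \<le> a \<Longrightarrow> factor w a (a + h - 1) = take h (drop (a - 1) w)"
  by (simp add: factor_def)

lemma take_drop_eq_shift_iff:
  "a + h + h \<le> length w \<Longrightarrow>
    take h (drop a w) = take h (drop (a + h) w) \<longleftrightarrow> (\<forall>q < h. w ! (h + (a + q)) = w ! (a + q))"
  by (auto simp: list_eq_iff_nth_eq ac_simps)

text \<open>Apart from the intended solution, the identity star also admits types RS with
  s = 1 and SR with t = 1; the hypotheses on swaps exclude these.\<close>
lemma error_sets_shift:
  fixes s t l :: nat
  assumes star: "\<And>p. 1 \<le> p \<Longrightarrow> p \<le> l \<Longrightarrow>
      (p \<in> touched Oi \<union> touched Oj) = ((p \<in> (+) t ` touched Oi) \<noteq> (p + s \<in> touched Oj))"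
    and range: "touched Oi \<union> touched Oj \<subseteq> {1..l}"
    and disjoint: "touched Oi \<inter> touched Oj = {}"
    and ij: "op_pos Oi < op_pos Oj"
    and pos: "0 < s" "0 < t"
    and swap_j: "s = 1 \<Longrightarrow> is_swp Oj \<Longrightarrow> op_pos Oj \<in> (+) t ` touched Oi"
    and swap_i: "t = 1 \<Longrightarrow> is_swp Oi \<Longrightarrow> op_pos Oi \<in> touched Oj"
  shows "s = t \<and> op_pos Oj = op_pos Oi + s \<and> ((is_rep Oi \<and> is_rep Oj) \<or> (is_swp Oi \<and> is_swp Oj))"
proof (cases Oi; cases Oj)
  fix a b assume o: "Oi = Rep a" "Oj = Rep b"
  show ?thesis using star[of a] star[of b] range ij pos unfolding o by auto
next
  fix a b assume o: "Oi = Rep a" "Oj = Swp b"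
  show ?thesis using star[of a] star[of b] star[of "Suc b"] range ij pos swap_j disjoint
    unfolding o by auto
next
  fix a b assume o: "Oi = Swp a" "Oj = Rep b"
  show ?thesis using star[of a] star[of "Suc a"] star[of b] range ij pos swap_i disjoint
    unfolding o by auto
next
  fix a b assume o: "Oi = Swp a" "Oj = Swp b"
  show ?thesis using star[of a] star[of "Suc a"] star[of b] star[of "Suc b"] range ij pos disjoint
    unfolding o by auto
qed

context
  fixes f :: "bool list" and r :: nat and Oi Oj :: tilde_op
  assumes r_pos: "0 < r" and r_less: "r < length f"
    and overlap: "shift_overlap (touched Oi \<union> touched Oj) r f"
    and Oi_defined: "op_defined (take (length f - r) f) Oi"
    and Oj_defined: "op_defined (take (length f - r) f) Oj"
    and disjoint: "touched Oi \<inter> touched Oj = {}"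
    and ij: "op_pos Oi < op_pos Oj"
begin

lemma touched_range: "touched Oi \<union> touched Oj \<subseteq> {1..length f - r}"
  using touched_subset_if_op_defined[OF Oi_defined] touched_subset_if_op_defined[OF Oj_defined]
    r_less by auto

lemma shift_condition_if_occurrence:
  assumes Tj: "shift_overlap (touched Oj) t f" and prefix: "\<forall>q < t. f ! (s + q) = f ! q"
    and st: "s + t = r"
  shows "s = t \<and> op_pos Oj = op_pos Oi + t \<and> ((is_rep Oi \<and> is_rep Oj) \<or> (is_swp Oi \<and> is_swp Oj))"
proof -
  have Oi_in: "op_pos Oi \<in> touched Oi \<union> touched Oj" and Oj_in: "op_pos Oj \<in> touched Oj"
    by (simp_all add: op_pos_in_touched)
  have "t \<noteq> 0"
  proof
    assume "t = 0"
    with Tj have Tj0: "shift_overlap (touched Oj) 0 f" by simp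
    have "op_pos Oj \<in> {1..length f - r}"
      using Oj_in touched_range by blast
    then have "0 < op_pos Oj" "0 + op_pos Oj \<le> length f"
      by auto
    with shift_overlap_unique[OF Tj0 shift_overlap_empty_zero] Oj_in show False by blast
  qed
  have "s \<noteq> 0"
  proof
    assume "s = 0"
    with st Tj have Tjr: "shift_overlap (touched Oj) r f" by simp
    have "op_pos Oi \<in> {1..length f - r}"
      using Oi_in touched_range by blast
    then have "0 < op_pos Oi" "r + op_pos Oi \<le> length f"
      by auto
    with shift_overlap_unique[OF Tjr overlap] op_pos_in_touched[of Oi] disjoint show False
      by blast
  qed
  have Ti_shift: "shift_overlap ((+) t ` touched Oi) s f"
  proof -
    have "shift_overlap ((+) t ` ((touched Oi \<union> touched Oj) - touched Oj)) s f"
      using overlap st prefix touched_range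
      by (intro shift_overlap_sub[OF _ Tj]) (auto simp: add.commute)
    moreover have "(touched Oi \<union> touched Oj) - touched Oj = touched Oi"
      using disjoint by blast
    ultimately show ?thesis by simp
  qed
  have sum: "shift_overlap {p. (p \<in> (+) t ` touched Oi) \<noteq> (s + p \<in> touched Oj)} r f"
    using shift_overlap_add[OF Ti_shift Tj] st by simp
  have star:
    "(p \<in> touched Oi \<union> touched Oj) = ((p \<in> (+) t ` touched Oi) \<noteq> (p + s \<in> touched Oj))"
    if "1 \<le> p" "p \<le> length f - r" for p
    using shift_overlap_unique[OF overlap sum, of p] that r_less by (simp add: add.commute)
  have swap_j: "op_pos Oj \<in> (+) t ` touched Oi" if "s = 1" "is_swp Oj"
    using swap_pos_in_shift_overlap_one[of _ f "op_pos Oj"] Ti_shift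
      op_defined_take[OF Oj_defined] that
    by (cases Oj) auto
  have swap_i: "op_pos Oi \<in> touched Oj" if "t = 1" "is_swp Oi"
    using swap_pos_in_shift_overlap_one[of _ f "op_pos Oi"] Tj op_defined_take[OF Oi_defined] that
    by (cases Oi) auto
  from error_sets_shift[OF star touched_range disjoint ij _ _ swap_j swap_i] \<open>s \<noteq> 0\<close> \<open>t \<noteq> 0\<close>
  show ?thesis by auto
qed

lemma shift_overlap_half_if_condition:
  assumes type: "(is_rep Oi \<and> is_rep Oj) \<or> (is_swp Oi \<and> is_swp Oj)"
    and j: "op_pos Oj = op_pos Oi + h" and r: "r = h + h"
    and window: "\<And>q. q < h \<Longrightarrow> f ! (h + (op_pos Oi - 1 + q)) = f ! (op_pos Oi - 1 + q)"
  shows "shift_overlap (touched Oj) h f"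
  unfolding shift_overlap_def
proof (intro allI impI)
  fix k assume k: "h + k < length f"
  have Tj: "touched Oj = (+) h ` touched Oi"
    using type j by (cases Oi; cases Oj) auto
  have i: "1 \<le> op_pos Oi" "op_pos Oi \<le> length f - r"
    using touched_range op_pos_in_touched[of Oi] by auto
  show "f ! (h + k) = (f ! k \<noteq> (Suc k \<in> touched Oj))"
  proof (rule periodic_window_all
      [where P = "\<lambda>k. f ! (h + k) = (f ! k \<noteq> (Suc k \<in> touched Oj))"])
    fix k assume "k + h < length f - h"
    then have "f ! (h + (k + h)) = (f ! k \<noteq> (Suc k \<in> touched Oi \<union> touched Oj))"
      using overlap r unfolding shift_overlap_def by (metis add.commute add.left_commute less_diff_conv)
    moreover have "Suc (k + h) \<in> touched Oj \<longleftrightarrow> Suc k \<in> touched Oi"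
      unfolding Tj by auto
    ultimately show "(f ! (h + (k + h)) = (f ! (k + h) \<noteq> (Suc (k + h) \<in> touched Oj))) =
        (f ! (h + k) = (f ! k \<noteq> (Suc k \<in> touched Oj)))"
      using disjoint by (auto simp: add.commute)
  next
    fix k assume "op_pos Oi - 1 \<le> k" "k < op_pos Oi - 1 + h"
    moreover from this i have "Suc k \<notin> touched Oj"
      using op_pos_le_touched[of "Suc k" Oj] j by auto
    ultimately show "f ! (h + k) = (f ! k \<noteq> (Suc k \<in> touched Oj))"
      using window[of "k - (op_pos Oi - 1)"] by simp
  qed (use r r_pos i k in auto)
qed

lemma sublist_iff_condition:
  "sublist f (take r f @ flip_at (touched Oj) f) \<longleftrightarrow>
     ((is_rep Oi \<and> is_rep Oj) \<or> (is_swp Oi \<and> is_swp Oj)) \<and> even r \<and>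
     op_pos Oj - op_pos Oi = r div 2 \<and>
     factor f (op_pos Oi) (op_pos Oi + r div 2 - 1) = factor f (op_pos Oj) (op_pos Oj + r div 2 - 1)"
    (is "?occ \<longleftrightarrow> ?type \<and> _")
proof -
  define i where "i = op_pos Oi"
  have i: "1 \<le> i" "i \<le> length f - r"
    using touched_range op_pos_in_touched[of Oi] unfolding i_def by auto
  have factor_iff: "factor f i (i + h - 1) = factor f (i + h) (i + h + h - 1) \<longleftrightarrow>
      (\<forall>q < h. f ! (h + (i - 1 + q)) = f ! (i - 1 + q))" if "r = h + h" for h
    using factor_eq_take_drop[of i f h] factor_eq_take_drop[of "i + h" f h]
      take_drop_eq_shift_iff[of "i - 1" h f] that i r_less
    by (simp add: ac_simps)
  have below_Oj: "Suc k \<notin> touched Oj" if "Suc k < op_pos Oj" for k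
    using op_pos_le_touched[of "Suc k" Oj] that by auto
  show ?thesis
  proof
    assume ?occ
    then obtain s t where st: "s + t = r" and Tj: "shift_overlap (touched Oj) t f"
      and prefix: "\<forall>q < t. f ! (s + q) = f ! q"
      using sublist_take_append_flip_at_iff r_less by auto
    with shift_condition_if_occurrence have s: "s = t" and j: "op_pos Oj = i + t" and ?type
      unfolding i_def by auto
    have "\<forall>q < t. f ! (t + (i - 1 + q)) = f ! (i - 1 + q)"
    proof (intro allI impI)
      fix q assume "q < t"
      with Tj[unfolded shift_overlap_def, rule_format, of "i - 1 + q"] below_Oj[of "i - 1 + q"]
        i j st s
      show "f ! (t + (i - 1 + q)) = f ! (i - 1 + q)" by auto
    qed
    with factor_iff[of t] st s j \<open>?type\<close>
    show "?type \<and> even r \<and> op_pos Oj - op_pos Oi = r div 2 \<and>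
        factor f (op_pos Oi) (op_pos Oi + r div 2 - 1) = factor f (op_pos Oj) (op_pos Oj + r div 2 - 1)"
      unfolding i_def by auto
  next
    define h where "h = r div 2"
    assume cond: "?type \<and> even r \<and> op_pos Oj - op_pos Oi = r div 2 \<and>
        factor f (op_pos Oi) (op_pos Oi + r div 2 - 1) = factor f (op_pos Oj) (op_pos Oj + r div 2 - 1)"
    then have r: "r = h + h" and j: "op_pos Oj = i + h"
      using ij unfolding h_def i_def by auto
    with cond factor_iff[OF r] have "\<forall>q < h. f ! (h + (i - 1 + q)) = f ! (i - 1 + q)"
      unfolding h_def i_def by auto
    with cond r j have Tj: "shift_overlap (touched Oj) h f"
      by (intro shift_overlap_half_if_condition) (auto simp: i_def)
    have "\<forall>q < h. f ! (h + q) = f ! q"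
    proof (intro allI impI)
      fix q assume "q < h"
      with Tj[unfolded shift_overlap_def, rule_format, of q] below_Oj[of q] i j r r_less
      show "f ! (h + q) = f ! q" by auto
    qed
    with Tj r show ?occ
      using sublist_take_append_flip_at_iff r_less by auto
  qed
qed

end

theorem lemma4:
  fixes f :: "bool list" and r :: nat and Oi Oj :: tilde_op and ops :: "tilde_op list"
  assumes "1 \<le> r" and "r < length f"
    and "dist_tilde (pre (length f - r) f) (suf (length f - r) f) = 2"
    and "minimal_tilde_transf (pre (length f - r) f) (suf (length f - r) f) ops"
    and "ops = [Oi, Oj] \<or> ops = [Oj, Oi]"
    and "op_pos Oi < op_pos Oj"
  shows "(\<not> free f (pre r f @ apply_op f Oj)) \<longleftrightarrow>
     ((is_rep Oi \<and> is_rep Oj) \<or> (is_swp Oi \<and> is_swp Oj)) \<and> even r \<and>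
     op_pos Oj - op_pos Oi = r div 2 \<and>
     factor f (op_pos Oi) (op_pos Oi + r div 2 - 1) = factor f (op_pos Oj) (op_pos Oj + r div 2 - 1)"
proof -
  define u where "u = take (length f - r) f"
  have seq: "apply_seq u ops (drop r f)"
    and disjoint_ops: "\<forall>a < length ops. \<forall>b < length ops.
      a \<noteq> b \<longrightarrow> touched (ops ! a) \<inter> touched (ops ! b) = {}"
    using assms(2,4) unfolding minimal_tilde_transf_def pre_def suf_def u_def by auto
  have disjoint: "touched Oi \<inter> touched Oj = {}"
    using disjoint_ops[rule_format, of 0 1] assms(5) by auto
  have "op_defined u Oi \<and> op_defined u Oj \<and> drop r f = flip_at (touched Oi \<union> touched Oj) u"
    using assms(5) seq apply_seq_disjoint_pair[of u Oi Oj] apply_seq_disjoint_pair[of u Oj Oi] disjoint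
    by (auto simp: Int_commute Un_commute)
  then have defined: "op_defined u Oi" "op_defined u Oj"
    and overlap: "shift_overlap (touched Oi \<union> touched Oj) r f"
    using assms(2) shift_overlap_iff_drop unfolding u_def by auto
  have "apply_op f Oj = flip_at (touched Oj) f"
    using apply_op_eq_flip_at op_defined_take defined(2) unfolding u_def by blast
  with sublist_iff_condition[OF _ assms(2) overlap defined[unfolded u_def] disjoint assms(6)] assms(1)
  show ?thesis unfolding free_def pre_def by auto
qed

end
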